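(* Let $m\ge 2$ and $h\ge 1$ be integers and $n'=2^{3m+h-1}-2^{2m}-2^m$. Let $\mathbf{C}_0$ be a projective binary linear $[2^{2m}-1,3m]$ code whose set of nonzero weights is $\{2^{2m-1}-2^{m-1},\,2^{2m-1},\,2^{2m-1}+2^{m-1}\}$, and let $\mathbf{C}_1$ be its simplex complementary code of dimension $3m+h$, a $[2^{3m+h}-2^{2m},\ 3m+h,\ 2^{3m+h-1}-2^{2m-1}-2^{m-1}]_2$ code with maximum weight $2^{3m+h-1}$. Then the code $\mathbf{C}'$ obtained from $\mathbf{C}_1$ by the extension construction is a minimal binary linear code with parameters $[2^{3m+h}-2^{2m}+n',\ 3m+h,\ 2^{3m+h-1}-2^{2m-1}-2^{m-1}]_2$ and maximum weight $2^{3m+h}-2^{2m}-2^m$, and it violates the Ashikhmin–Barg condition.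
   Context: Projective code: columns of a generator matrix are nonzero and pairwise distinct (binary case). Simplex complementary code of a projective binary $[n,k]$ code of dimension $K=k+h$: append $h$ zeros to the columns of a generator matrix, and take the code generated by the matrix whose columns are all nonzero vectors of $\mathbf{F}_2^K$ other than these $n$ vectors. Extension construction for a binary linear $[N,K]$ code $\mathbf{D}$ with $K\ge2$, minimum nonzero weight $w_{min}$, maximum weight $w_{max}$ and $n'=2w_{min}-w_{max}\ge1$: choose a basis $\mathbf{r}_1,\dots,\mathbf{r}_K$ with $wt(\mathbf{r}_1)=w_{max}$, $wt(\mathbf{r}_2)=w_{min}$; the extended code is generated by $(\mathbf{1},\mathbf{r}_1),(\mathbf{0},\mathbf{r}_2),\dots,(\mathbf{0},\mathbf{r}_K)$ in $\mathbf{F}_2^{n'+N}$. Minimal code: any two nonzero codewords with nested supports are equal. Ashikhmin–Barg condition (binary): $w_{min}/w_{max}>1/2$. *)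

theory Defs
  imports Complex_Main
begin

text \<open>Binary vectors of length n are represented as bool lists of length n
  (True = 1, False = 0). A binary linear code of length n is a set of such lists.\<close>

definition zero_vec :: "nat \<Rightarrow> bool list" where
  "zero_vec n = replicate n False"

definition vxor :: "bool list \<Rightarrow> bool list \<Rightarrow> bool list" where
  "vxor u v = map2 (\<noteq>) u v"

definition wt :: "bool list \<Rightarrow> nat" where
  "wt v = length (filter id v)"

definition supp :: "bool list \<Rightarrow> nat set" where
  "supp v = {i. i < length v \<and> v ! i}"

definition dot :: "bool list \<Rightarrow> bool list \<Rightarrow> bool" where
  "dot u c = odd (length (filter id (map2 (\<and>) u c)))"

definition lin_code :: "nat \<Rightarrow> bool list set \<Rightarrow> bool" where
  "lin_code n C \<longleftrightarrow> (\<forall>c\<in>C. length c = n) \<and> zero_vec n \<in> C \<and>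
     (\<forall>u\<in>C. \<forall>v\<in>C. vxor u v \<in> C)"

definition nonzero_weights :: "bool list set \<Rightarrow> nat set" where
  "nonzero_weights C = {wt c | c. c \<in> C \<and> wt c \<noteq> 0}"

definition min_wt :: "bool list set \<Rightarrow> nat" where
  "min_wt C = Min (nonzero_weights C)"

definition max_wt :: "bool list set \<Rightarrow> nat" where
  "max_wt C = Max (nonzero_weights C)"

text \<open>[n,k,d]_2 code: linear of length n, dimension k (i.e. 2^k codewords),
  minimum distance (= minimum nonzero weight) d.\<close>
definition code_params :: "bool list set \<Rightarrow> nat \<Rightarrow> nat \<Rightarrow> nat \<Rightarrow> bool" where
  "code_params C n k d \<longleftrightarrow> lin_code n C \<and> card C = 2 ^ k \<and> min_wt C = d"

text \<open>Code generated by a generator matrix with k rows, given by its list of columns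
  (each column a vector of length k): codewords are uG for u in F_2^k.\<close>
definition code_of_cols :: "nat \<Rightarrow> bool list list \<Rightarrow> bool list set" where
  "code_of_cols k cols = {map (dot u) cols | u. length u = k}"

definition lincomb :: "nat \<Rightarrow> bool list list \<Rightarrow> bool list \<Rightarrow> bool list" where
  "lincomb n rows cs =
     foldr (\<lambda>(c, r) acc. if c then vxor r acc else acc) (zip cs rows) (zero_vec n)"

definition gen_code :: "nat \<Rightarrow> bool list list \<Rightarrow> bool list set" where
  "gen_code n rows = {lincomb n rows cs | cs. length cs = length rows}"

definition projective :: "nat \<Rightarrow> bool list list \<Rightarrow> bool" where
  "projective k cols \<longleftrightarrow> distinct cols \<and>
     (\<forall>c\<in>set cols. length c = k \<and> c \<noteq> zero_vec k)"

definition simplex_comp_cols :: "nat \<Rightarrow> nat \<Rightarrow> bool list list \<Rightarrow> bool list list" where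
  "simplex_comp_cols k h cols =
     filter (\<lambda>v. v \<noteq> zero_vec (k + h) \<and> v \<notin> set (map (\<lambda>c. c @ replicate h False) cols))
       (List.n_lists (k + h) [False, True])"

definition simplex_comp :: "nat \<Rightarrow> nat \<Rightarrow> bool list list \<Rightarrow> bool list set" where
  "simplex_comp k h cols = code_of_cols (k + h) (simplex_comp_cols k h cols)"

definition ext_basis :: "bool list set \<Rightarrow> nat \<Rightarrow> nat \<Rightarrow> bool list list \<Rightarrow> bool" where
  "ext_basis D N K rs \<longleftrightarrow> length rs = K \<and> set rs \<subseteq> D \<and>
     gen_code N rs = D \<and> card D = 2 ^ K \<and>
     wt (rs ! 0) = max_wt D \<and> wt (rs ! 1) = min_wt D"

definition ext_code :: "bool list set \<Rightarrow> nat \<Rightarrow> bool list list \<Rightarrow> bool list set" where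
  "ext_code D N rs =
     (let n' = 2 * min_wt D - max_wt D in
      gen_code (n' + N)
        ((replicate n' True @ hd rs) # map (\<lambda>r. replicate n' False @ r) (tl rs)))"

definition minimal_code :: "bool list set \<Rightarrow> bool" where
  "minimal_code C \<longleftrightarrow> (\<forall>c\<in>C. \<forall>c'\<in>C. wt c \<noteq> 0 \<longrightarrow> wt c' \<noteq> 0 \<longrightarrow>
     supp c \<subseteq> supp c' \<longrightarrow> c = c')"

definition ashikhmin_barg :: "bool list set \<Rightarrow> bool" where
  "ashikhmin_barg C \<longleftrightarrow> real (min_wt C) / real (max_wt C) > 1 / 2"

end

theory Submission
  imports Defs
begin

(* For a nonzero message u = (u', u''), the codeword uG of the simplex complementary code D has
  weight 2^(3m+h-1) - wt (u' G0), where G0 generates C0: u has dot product 1 with exactly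
  2^(3m+h-1) vectors of F_2^(3m+h), and the removed padded columns account for wt (u' G0).
  Hence w_max(D) = 2^(3m+h-1) and w_min(D) = 2^(3m+h-1) - 2^(2m-1) - 2^(m-1), so
  w_max(D) < 2 w_min(D).  In the extension C' with n' = 2 w_min - w_max, codewords starting with 0
  have weights in [w_min, w_max] and those starting with 1 in [n' + w_min, 2 w_min]; these bands
  force minimality, while w_max(C') = 2 w_min(C') puts the Ashikhmin-Barg ratio exactly at 1/2. *)

lemma length_vxor [simp]: "length (vxor u v) = min (length u) (length v)"
  by (simp add: vxor_def)

lemma nth_vxor [simp]: "i < length u \<Longrightarrow> i < length v \<Longrightarrow> vxor u v ! i = (u ! i \<noteq> v ! i)"
  by (simp add: vxor_def)

lemma length_zero_vec [simp]: "length (zero_vec n) = n"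
  by (simp add: zero_vec_def)

lemma vxor_zero_vec_right: "length u = n \<Longrightarrow> vxor u (zero_vec n) = u"
  by (simp add: vxor_def zero_vec_def list_eq_iff_nth_eq)

lemma vxor_append: "length p = length q \<Longrightarrow> vxor (p @ r) (q @ s) = vxor p q @ vxor r s"
  by (simp add: vxor_def)

lemma vxor_replicate: "vxor (replicate n a) (replicate n b) = replicate n (a \<noteq> b)"
  by (simp add: vxor_def list_eq_iff_nth_eq)

lemma wt_append: "wt (u @ v) = wt u + wt v"
  by (simp add: wt_def)

lemma wt_replicate: "wt (replicate n b) = (if b then n else 0)"
  by (simp add: wt_def)

lemma wt_map: "wt (map P xs) = length (filter P xs)"
  by (induct xs) (auto simp: wt_def)

lemma wt_map_distinct: "distinct xs \<Longrightarrow> wt (map P xs) = card {x \<in> set xs. P x}"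
  by (simp add: wt_map distinct_length_filter Int_def conj_commute)

lemma wt_eq_0_iff: "wt v = 0 \<longleftrightarrow> v = zero_vec (length v)"
  by (induct v) (auto simp: wt_def zero_vec_def)

lemma wt_vxor_eq_0_iff: "length u = length v \<Longrightarrow> wt (vxor u v) = 0 \<longleftrightarrow> u = v"
  by (auto simp: wt_eq_0_iff zero_vec_def list_eq_iff_nth_eq)

lemma wt_eq_card_supp: "wt v = card (supp v)"
  by (simp add: wt_def supp_def length_filter_conv_card)

lemma wt_eq_wt_add_wt_vxor:
  assumes "length u = length v" and "supp u \<subseteq> supp v"
  shows "wt v = wt u + wt (vxor u v)"
proof -
  have "supp (vxor u v) = supp v - supp u"
    using assms by (auto simp: supp_def)
  moreover have "finite (supp v)"
    by (simp add: supp_def)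
  ultimately show ?thesis
    using assms(2) by (simp add: wt_eq_card_supp card_Diff_subset card_mono finite_subset)
qed

lemma finite_bool_lists: "finite {v :: bool list. length v = n}"
  using finite_lists_length_eq[of "UNIV :: bool set" n] by simp

lemma card_bool_lists: "card {v :: bool list. length v = n} = 2 ^ n"
  using card_lists_length_eq[of "UNIV :: bool set" n] by simp

lemma dot_Cons [simp]: "dot (a # u) (b # v) = ((a \<and> b) \<noteq> dot u v)"
  by (cases a; cases b) (simp_all add: dot_def)

lemma dot_Nil [simp]: "dot [] v = False"
  by (simp add: dot_def)

lemma dot_replicate_False: "dot u (replicate n False) = False"
proof -
  have "filter (\<lambda>(x, y). x \<and> y) (zip u (replicate n False)) = []"
    by (auto simp: filter_empty_conv set_zip)
  then show ?thesis
    by (simp add: dot_def)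
qed

lemma dot_replicate_False_left: "dot (replicate n False) v = False"
proof -
  have "filter (\<lambda>(x, y). x \<and> y) (zip (replicate n False) v) = []"
    by (auto simp: filter_empty_conv set_zip)
  then show ?thesis
    by (simp add: dot_def)
qed

lemma dot_append_replicate_False:
  "length u = length c + h \<Longrightarrow> dot u (c @ replicate h False) = dot (take (length c) u) c"
proof (induction c arbitrary: u)
  case Nil
  then show ?case by (simp add: dot_replicate_False)
next
  case (Cons b c)
  then show ?case by (cases u) auto
qed

lemma card_bool_lists_Suc:
  "card {v :: bool list. length v = Suc n \<and> P v} =
    card {v. length v = n \<and> P (False # v)} + card {v. length v = n \<and> P (True # v)}"
proof -
  let ?A = "{v. length v = n \<and> P (False # v)}" and ?B = "{v. length v = n \<and> P (True # v)}"
  have split: "{v :: bool list. length v = Suc n \<and> P v} = Cons False ` ?A \<union> Cons True ` ?B"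
  proof (rule set_eqI)
    fix v :: "bool list"
    show "v \<in> {v. length v = Suc n \<and> P v} \<longleftrightarrow> v \<in> Cons False ` ?A \<union> Cons True ` ?B"
    proof (cases v)
      case (Cons b w)
      then show ?thesis by (cases b) auto
    qed auto
  qed
  have "finite ?A" and "finite ?B"
    using finite_bool_lists[of n] by (auto elim: rev_finite_subset)
  then show ?thesis
    unfolding split by (subst card_Un_disjoint) (auto simp: card_image)
qed

lemma card_bool_lists_not:
  "card {v :: bool list. length v = n \<and> \<not> P v} = 2 ^ n - card {v. length v = n \<and> P v}"
proof -
  have "{v :: bool list. length v = n \<and> \<not> P v} = {v. length v = n} - {v. length v = n \<and> P v}"
    by auto
  then show ?thesis
    using rev_finite_subset[OF finite_bool_lists[of n]]
    by (simp add: card_Diff_subset card_bool_lists subset_iff)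
qed

lemma card_dot_eq:
  "length u = n \<Longrightarrow>
    card {v. length v = n \<and> dot u v} = (if u = replicate n False then 0 else 2 ^ (n - 1))"
proof (induction u arbitrary: n)
  case Nil
  then show ?case by simp
next
  case (Cons a u)
  then obtain n' where n: "n = Suc n'" and "length u = n'"
    by auto
  with Cons.IH have IH: "card {v. length v = n' \<and> dot u v} = (if u = replicate n' False then 0 else 2 ^ (n' - 1))"
    by simp
  have "card {v. length v = n' \<and> \<not> dot u v} = 2 ^ n' - card {v. length v = n' \<and> dot u v}"
    by (rule card_bool_lists_not)
  moreover have "2 ^ (n' - 1) \<le> (2::nat) ^ n'" and "n' \<noteq> 0 \<Longrightarrow> 2 ^ (n' - 1) + 2 ^ (n' - 1) = (2::nat) ^ n'"
    by (simp_all add: power_eq_if)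
  moreover have "u \<noteq> replicate n' False \<Longrightarrow> n' \<noteq> 0"
    using \<open>length u = n'\<close> by auto
  ultimately show ?case
    unfolding n card_bool_lists_Suc using IH by (cases a) auto
qed

section \<open>Linear combinations and generated codes\<close>

lemma lincomb_Nil: "lincomb n [] cs = zero_vec n"
  by (simp add: lincomb_def)

lemma lincomb_Nil_coeffs: "lincomb n rows [] = zero_vec n"
  by (simp add: lincomb_def)

lemma lincomb_Cons:
  "lincomb n (r # rows) (c # cs) = (if c then vxor r (lincomb n rows cs) else lincomb n rows cs)"
  by (simp add: lincomb_def)

lemma length_lincomb: "\<forall>r\<in>set rows. length r = n \<Longrightarrow> length (lincomb n rows cs) = n"
proof (induction rows arbitrary: cs)
  case Nil
  then show ?case by (simp add: lincomb_Nil)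
next
  case (Cons r rows)
  then show ?case by (cases cs) (auto simp: lincomb_Nil_coeffs lincomb_Cons)
qed

lemma lincomb_replicate_False: "lincomb n rows (replicate k False) = zero_vec n"
proof (induction rows arbitrary: k)
  case Nil
  then show ?case by (simp add: lincomb_Nil)
next
  case (Cons r rows)
  then show ?case by (cases k) (auto simp: lincomb_Nil_coeffs lincomb_Cons)
qed

lemma vxor_lincomb:
  assumes "\<forall>r\<in>set rows. length r = n" and "length cs = length rows" and "length ds = length rows"
  shows "vxor (lincomb n rows cs) (lincomb n rows ds) = lincomb n rows (map2 (\<noteq>) cs ds)"
  using assms
proof (induction rows arbitrary: cs ds)
  case Nil
  then show ?case by (simp add: lincomb_Nil vxor_zero_vec_right)
next
  case (Cons r rows)
  then obtain c cs' d ds' where cs: "cs = c # cs'" and ds: "ds = d # ds'"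
    and "length cs' = length rows" and "length ds' = length rows"
    by (auto simp: length_Suc_conv)
  with Cons have IH: "vxor (lincomb n rows cs') (lincomb n rows ds') = lincomb n rows (map2 (\<noteq>) cs' ds')"
    by simp
  have lengths: "length r = n" "length (lincomb n rows cs') = n" "length (lincomb n rows ds') = n"
    using Cons.prems(1) by (simp_all add: length_lincomb)
  have "lincomb n (r # rows) (map2 (\<noteq>) cs ds) =
      (if c \<noteq> d then vxor r (vxor (lincomb n rows cs') (lincomb n rows ds'))
       else vxor (lincomb n rows cs') (lincomb n rows ds'))"
    unfolding cs ds IH by (simp add: lincomb_Cons)
  then show ?case
    unfolding cs ds lincomb_Cons using lengths by (cases c; cases d) (auto simp: list_eq_iff_nth_eq)
qed

lemma lincomb_unit:
  assumes "\<forall>r\<in>set rows. length r = n" and "i < length rows"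
  shows "lincomb n rows ((replicate (length rows) False)[i := True]) = rows ! i"
  using assms
proof (induction rows arbitrary: i)
  case Nil
  then show ?case by simp
next
  case (Cons r rows)
  then show ?case
    by (cases i) (auto simp: lincomb_Cons lincomb_replicate_False vxor_zero_vec_right)
qed

lemma lin_code_gen_code:
  assumes "\<forall>r\<in>set rows. length r = n"
  shows "lin_code n (gen_code n rows)"
  unfolding lin_code_def
proof (intro conjI ballI)
  show "length c = n" if "c \<in> gen_code n rows" for c
    using that assms by (auto simp: gen_code_def length_lincomb)
  show "zero_vec n \<in> gen_code n rows"
    unfolding gen_code_def
    by (auto intro!: exI[of _ "replicate (length rows) False"] simp: lincomb_replicate_False)
  show "vxor u v \<in> gen_code n rows" if "u \<in> gen_code n rows" and "v \<in> gen_code n rows" for u v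
    using that vxor_lincomb[OF assms] unfolding gen_code_def by fastforce
qed

lemma finite_gen_code: "finite (gen_code n rows)"
  unfolding gen_code_def using finite_bool_lists by simp

lemma inj_on_lincomb:
  assumes "card (gen_code n rows) = 2 ^ length rows"
  shows "inj_on (lincomb n rows) {cs. length cs = length rows}"
proof (rule eq_card_imp_inj_on)
  show "card (lincomb n rows ` {cs. length cs = length rows}) = card {cs :: bool list. length cs = length rows}"
    using assms unfolding gen_code_def card_bool_lists by (simp add: setcompr_eq_image)
qed (rule finite_bool_lists)

lemma finite_nonzero_weights: "finite C \<Longrightarrow> finite (nonzero_weights C)"
  unfolding nonzero_weights_def by simp

lemma wt_in_nonzero_weights: "c \<in> C \<Longrightarrow> wt c \<noteq> 0 \<Longrightarrow> wt c \<in> nonzero_weights C"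
  unfolding nonzero_weights_def by blast

lemma min_wt_le_wt: "finite C \<Longrightarrow> c \<in> C \<Longrightarrow> wt c \<noteq> 0 \<Longrightarrow> min_wt C \<le> wt c"
  unfolding min_wt_def by (simp add: finite_nonzero_weights wt_in_nonzero_weights)

lemma wt_le_max_wt: "finite C \<Longrightarrow> c \<in> C \<Longrightarrow> wt c \<le> max_wt C"
  unfolding max_wt_def
  by (cases "wt c = 0") (simp_all add: finite_nonzero_weights wt_in_nonzero_weights)

lemma min_wt_pos: "finite C \<Longrightarrow> nonzero_weights C \<noteq> {} \<Longrightarrow> 0 < min_wt C"
  unfolding min_wt_def
  using Min_in[OF finite_nonzero_weights] by (fastforce simp: nonzero_weights_def)

lemma min_wt_eqI:
  assumes "finite C" and "c \<in> C" and "wt c = w" and "w \<noteq> 0"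
    and "\<And>c. c \<in> C \<Longrightarrow> wt c \<noteq> 0 \<Longrightarrow> w \<le> wt c"
  shows "min_wt C = w"
  unfolding min_wt_def
  using assms by (intro Min_eqI) (auto simp: finite_nonzero_weights nonzero_weights_def)

lemma max_wt_eqI:
  assumes "finite C" and "c \<in> C" and "wt c = w" and "w \<noteq> 0"
    and "\<And>c. c \<in> C \<Longrightarrow> wt c \<le> w"
  shows "max_wt C = w"
  unfolding max_wt_def
  using assms by (intro Max_eqI) (auto simp: finite_nonzero_weights nonzero_weights_def)

(* If supp a is strictly inside supp b, then wt b = wt a + wt (a + b), and for each of the three
  possible leading bits of a, b, a + b this sum overshoots the band of b because W < 2 w. *)
lemma minimal_code_if_weight_bands:
  assumes lin: "lin_code n C" and "0 < n" and "W < 2 * w"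
    and bands: "\<And>c. c \<in> C \<Longrightarrow> wt c \<noteq> 0 \<Longrightarrow>
      w + (if c ! 0 then k else 0) \<le> wt c \<and> wt c \<le> W + (if c ! 0 then k else 0)"
  shows "minimal_code C"
  unfolding minimal_code_def
proof (intro ballI impI)
  fix a b assume a: "a \<in> C" and b: "b \<in> C" and "wt a \<noteq> 0" and "wt b \<noteq> 0"
    and sub: "supp a \<subseteq> supp b"
  show "a = b"
  proof (rule ccontr)
    assume "a \<noteq> b"
    have len: "length a = n" "length b = n"
      using lin a b by (auto simp: lin_code_def)
    have "vxor a b \<in> C"
      using lin a b by (auto simp: lin_code_def)
    moreover have "wt (vxor a b) \<noteq> 0"
      using \<open>a \<noteq> b\<close> len by (simp add: wt_vxor_eq_0_iff)
    ultimately have band_ab: "w + (if vxor a b ! 0 then k else 0) \<le> wt (vxor a b)"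
      by (rule conjunct1[OF bands])
    have "wt b = wt a + wt (vxor a b)"
      using len sub by (intro wt_eq_wt_add_wt_vxor) simp_all
    moreover have "vxor a b ! 0 = (a ! 0 \<noteq> b ! 0)"
      using len \<open>0 < n\<close> by simp
    moreover have "a ! 0 \<longrightarrow> b ! 0"
      using len sub \<open>0 < n\<close> by (auto simp: supp_def)
    ultimately show False
      using bands[OF a \<open>wt a \<noteq> 0\<close>] bands[OF b \<open>wt b \<noteq> 0\<close>] band_ab \<open>W < 2 * w\<close>
      by (cases "a ! 0"; cases "b ! 0"; simp; linarith)
  qed
qed

section \<open>The extension construction\<close>

lemma lincomb_zero_prefixed:
  assumes "\<forall>r\<in>set rows. length r = N"
  shows "lincomb (n + N) (map ((@) (replicate n False)) rows) cs = replicate n False @ lincomb N rows cs"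
  using assms
proof (induction rows arbitrary: cs)
  case Nil
  then show ?case by (simp add: lincomb_Nil zero_vec_def replicate_add)
next
  case (Cons r rows)
  then show ?case
    by (cases cs) (auto simp: lincomb_Cons lincomb_Nil_coeffs zero_vec_def replicate_add
        vxor_append vxor_replicate)
qed

lemma gen_code_prefixed:
  assumes "\<forall>r\<in>set (r # rows). length r = N"
  shows "gen_code (n + N) ((replicate n True @ r) # map ((@) (replicate n False)) rows) =
    (\<lambda>cs. replicate n (hd cs) @ lincomb N (r # rows) cs) ` {cs. length cs = Suc (length rows)}"
proof -
  have "lincomb (n + N) ((replicate n True @ r) # map ((@) (replicate n False)) rows) (c # cs) =
      replicate n c @ lincomb N (r # rows) (c # cs)" for c cs
    using assms by (simp add: lincomb_Cons lincomb_zero_prefixed length_lincomb vxor_append vxor_replicate)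
  then have "lincomb (n + N) ((replicate n True @ r) # map ((@) (replicate n False)) rows) cs =
      replicate n (hd cs) @ lincomb N (r # rows) cs" if "length cs = Suc (length rows)" for cs
    using that by (cases cs) simp_all
  then show ?thesis
    unfolding gen_code_def setcompr_eq_image by (intro image_cong) simp_all
qed

context
  fixes D :: "bool list set" and N K :: nat and rs :: "bool list list"
  assumes basis: "ext_basis D N K rs"
    and two_le_K: "2 \<le> K"
    and length_D: "\<forall>c\<in>D. length c = N"
    and max_wt_lt: "max_wt D < 2 * min_wt D"
begin

private lemma length_basis: "length rs = K"
  and length_basis_rows: "\<forall>r\<in>set rs. length r = N"
  and D_eq_gen_code: "D = gen_code N rs"
  and set_basis_subset: "set rs \<subseteq> D"
  using basis length_D by (auto simp: ext_basis_def)

private lemma finite_D: "finite D"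
  using D_eq_gen_code finite_gen_code by simp

private lemma basis_weights: "wt (rs ! 0) = max_wt D" "wt (rs ! 1) = min_wt D"
  using basis by (simp_all add: ext_basis_def)

private lemma inj_on_lincomb_basis: "inj_on (lincomb N rs) {cs. length cs = K}"
  using basis inj_on_lincomb[of N rs] by (simp add: ext_basis_def length_basis)

lemma ext_code_eq_image:
  "ext_code D N rs =
    (\<lambda>cs. replicate (2 * min_wt D - max_wt D) (hd cs) @ lincomb N rs cs) ` {cs. length cs = K}"
proof -
  have rs: "rs = hd rs # tl rs"
    using length_basis two_le_K by (cases rs) auto
  then have "length (tl rs) = K - 1" and "Suc (K - 1) = K"
    using length_basis two_le_K by simp_all
  then show ?thesis
    unfolding ext_code_def Let_def
    using gen_code_prefixed[of "hd rs" "tl rs" N] length_basis_rows rs by simp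
qed

lemma lin_code_ext_code: "lin_code (2 * min_wt D - max_wt D + N) (ext_code D N rs)"
proof -
  have "\<forall>r\<in>set ((replicate n True @ hd rs) # map ((@) (replicate n False)) (tl rs)). length r = n + N" for n
    using length_basis_rows length_basis two_le_K by (cases rs) auto
  then show ?thesis
    unfolding ext_code_def Let_def by (rule lin_code_gen_code)
qed

lemma card_ext_code: "card (ext_code D N rs) = 2 ^ K"
proof -
  have "inj_on (\<lambda>cs. replicate n (hd cs) @ lincomb N rs cs) {cs. length cs = K}" for n
  proof (rule inj_onI)
    fix cs ds assume "cs \<in> {cs. length cs = K}" and "ds \<in> {cs. length cs = K}"
      and "replicate n (hd cs) @ lincomb N rs cs = replicate n (hd ds) @ lincomb N rs ds"
    then show "cs = ds"
      using inj_on_lincomb_basis by (auto dest: inj_onD)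
  qed
  then show ?thesis
    unfolding ext_code_eq_image by (simp add: card_image card_bool_lists)
qed

lemma ext_code_weight_bands:
  assumes "x \<in> ext_code D N rs" and "wt x \<noteq> 0"
  shows "min_wt D + (if x ! 0 then 2 * min_wt D - max_wt D else 0) \<le> wt x \<and>
    wt x \<le> max_wt D + (if x ! 0 then 2 * min_wt D - max_wt D else 0)"
proof -
  let ?n = "2 * min_wt D - max_wt D"
  obtain cs where cs: "length cs = K" and x: "x = replicate ?n (hd cs) @ lincomb N rs cs"
    using assms(1) unfolding ext_code_eq_image by blast
  have "lincomb N rs cs \<noteq> lincomb N rs (replicate K False)"
  proof
    assume "lincomb N rs cs = lincomb N rs (replicate K False)"
    then have "cs = replicate K False"
      using inj_on_lincomb_basis cs by (auto dest: inj_onD)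
    then show False
      using assms(2) two_le_K by (simp add: x wt_append wt_replicate lincomb_replicate_False wt_eq_0_iff)
  qed
  then have "wt (lincomb N rs cs) \<noteq> 0"
    using length_lincomb[OF length_basis_rows] by (simp add: lincomb_replicate_False wt_eq_0_iff)
  moreover have "lincomb N rs cs \<in> D"
    using cs D_eq_gen_code length_basis by (auto simp: gen_code_def)
  moreover have "x ! 0 = hd cs"
    using max_wt_lt by (simp add: x nth_append)
  ultimately show ?thesis
    using finite_D by (simp add: x wt_append wt_replicate min_wt_le_wt wt_le_max_wt)
qed

private lemma basis_row_in_ext_code:
  assumes "i < K"
  shows "replicate (2 * min_wt D - max_wt D) (i = 0) @ rs ! i \<in> ext_code D N rs"
proof -
  let ?cs = "(replicate K False)[i := True]"
  have "hd ?cs = (i = 0)"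
    using assms by (simp add: hd_conv_nth nth_list_update)
  moreover have "lincomb N rs ?cs = rs ! i"
    using lincomb_unit[OF length_basis_rows] assms by (simp add: length_basis)
  ultimately show ?thesis
    unfolding ext_code_eq_image by (intro image_eqI[where x = ?cs]) simp_all
qed

private lemma min_wt_D_pos: "0 < min_wt D"
proof -
  have "(replicate K False)[0 := True] \<noteq> replicate K False"
    using two_le_K by (cases K) simp_all
  then have "lincomb N rs ((replicate K False)[0 := True]) \<noteq> lincomb N rs (replicate K False)"
    using inj_on_lincomb_basis by (auto dest: inj_onD)
  then have "rs ! 0 \<noteq> zero_vec N"
    using lincomb_unit[OF length_basis_rows, of 0] two_le_K
    by (simp add: length_basis lincomb_replicate_False)
  moreover have "rs ! 0 \<in> D"
    using set_basis_subset nth_mem[of 0 rs] two_le_K length_basis by (simp add: subset_iff)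
  ultimately have "wt (rs ! 0) \<in> nonzero_weights D"
    using length_D by (intro wt_in_nonzero_weights) (auto simp: wt_eq_0_iff)
  then show ?thesis
    using finite_D min_wt_pos by blast
qed

lemma min_wt_ext_code: "min_wt (ext_code D N rs) = min_wt D"
proof (rule min_wt_eqI)
  show "finite (ext_code D N rs)"
    unfolding ext_code_eq_image using finite_bool_lists by simp
  show "replicate (2 * min_wt D - max_wt D) False @ rs ! 1 \<in> ext_code D N rs"
    using basis_row_in_ext_code[of 1] two_le_K by simp
  show "wt (replicate (2 * min_wt D - max_wt D) False @ rs ! 1) = min_wt D"
    using basis_weights(2) by (simp add: wt_append wt_replicate)
  show "min_wt D \<noteq> 0"
    using min_wt_D_pos by simp
  show "min_wt D \<le> wt x" if "x \<in> ext_code D N rs" and "wt x \<noteq> 0" for x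
    using ext_code_weight_bands[OF that] by linarith
qed

lemma max_wt_ext_code: "max_wt (ext_code D N rs) = 2 * min_wt D"
proof (rule max_wt_eqI)
  show "finite (ext_code D N rs)"
    unfolding ext_code_eq_image using finite_bool_lists by simp
  show "replicate (2 * min_wt D - max_wt D) True @ rs ! 0 \<in> ext_code D N rs"
    using basis_row_in_ext_code[of 0] two_le_K by simp
  show "wt (replicate (2 * min_wt D - max_wt D) True @ rs ! 0) = 2 * min_wt D"
    using max_wt_lt by (simp add: wt_append wt_replicate basis_weights)
  show "2 * min_wt D \<noteq> 0"
    using min_wt_D_pos by simp
  show "wt x \<le> 2 * min_wt D" if "x \<in> ext_code D N rs" for x
    using ext_code_weight_bands[OF that] max_wt_lt by (cases "wt x = 0") (auto split: if_splits)
qed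

lemma minimal_ext_code: "minimal_code (ext_code D N rs)"
proof (rule minimal_code_if_weight_bands[OF lin_code_ext_code _ max_wt_lt ext_code_weight_bands])
  show "0 < 2 * min_wt D - max_wt D + N"
    using max_wt_lt by simp
qed

lemma ext_code_not_ashikhmin_barg: "\<not> ashikhmin_barg (ext_code D N rs)"
  using min_wt_D_pos by (simp add: ashikhmin_barg_def min_wt_ext_code max_wt_ext_code)

end

section \<open>Simplex complementary codes\<close>

lemma set_simplex_comp_cols:
  "set (simplex_comp_cols k h cols) =
    {v. length v = k + h} - insert (zero_vec (k + h)) ((\<lambda>c. c @ replicate h False) ` set cols)"
  unfolding simplex_comp_cols_def by (auto simp: set_n_lists zero_vec_def)

lemma distinct_simplex_comp_cols: "distinct (simplex_comp_cols k h cols)"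
  unfolding simplex_comp_cols_def by (simp add: distinct_n_lists)

lemma length_lt_if_projective:
  assumes "projective k cols"
  shows "length cols < 2 ^ k"
proof -
  have "length cols = card (set cols)"
    using assms by (simp add: projective_def distinct_card)
  also have "\<dots> \<le> card ({v. length v = k} - {zero_vec k})"
    using assms by (intro card_mono) (auto simp: projective_def finite_bool_lists)
  also have "\<dots> = 2 ^ k - 1"
    by (simp add: card_Diff_singleton finite_bool_lists card_bool_lists)
  also have "\<dots> < 2 ^ k"
    by simp
  finally show ?thesis .
qed

lemma length_simplex_comp_cols:
  assumes "projective k cols"
  shows "length (simplex_comp_cols k h cols) = 2 ^ (k + h) - Suc (length cols)"
proof -
  let ?pad = "\<lambda>c. c @ replicate h False"
  have pad_subset: "insert (zero_vec (k + h)) (?pad ` set cols) \<subseteq> {v. length v = k + h}"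
    using assms by (auto simp: projective_def)
  have "zero_vec (k + h) \<notin> ?pad ` set cols"
    using assms by (auto simp: projective_def zero_vec_def replicate_add)
  moreover have "card (?pad ` set cols) = length cols"
    using assms by (simp add: card_image inj_on_def projective_def distinct_card)
  ultimately have card_insert: "card (insert (zero_vec (k + h)) (?pad ` set cols)) = Suc (length cols)"
    by simp
  have "length (simplex_comp_cols k h cols) = card (set (simplex_comp_cols k h cols))"
    by (simp add: distinct_card distinct_simplex_comp_cols)
  also have "\<dots> = 2 ^ (k + h) - Suc (length cols)"
    unfolding set_simplex_comp_cols using pad_subset card_insert
    by (simp add: card_Diff_subset card_bool_lists)
  finally show ?thesis .
qed

lemma wt_simplex_comp_codeword_eq_card_diff:
  assumes "projective k cols" and "length u = k + h"
  shows "wt (map (dot u) (simplex_comp_cols k h cols)) =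
    card {v. length v = k + h \<and> dot u v} - wt (map (dot (take k u)) cols)"
proof -
  let ?pad = "\<lambda>c. c @ replicate h False"
  have cols: "distinct cols" "\<forall>c\<in>set cols. length c = k"
    using assms(1) by (simp_all add: projective_def)
  have "wt (map (dot u) (simplex_comp_cols k h cols)) = card {v \<in> set (simplex_comp_cols k h cols). dot u v}"
    by (simp add: wt_map_distinct distinct_simplex_comp_cols)
  also have "{v \<in> set (simplex_comp_cols k h cols). dot u v} =
      {v. length v = k + h \<and> dot u v} - {v \<in> ?pad ` set cols. dot u v}"
    unfolding set_simplex_comp_cols by (auto simp: zero_vec_def dot_replicate_False)
  also have "card \<dots> = card {v. length v = k + h \<and> dot u v} - card {v \<in> ?pad ` set cols. dot u v}"
    using cols(2) by (intro card_Diff_subset) auto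
  also have "{v \<in> ?pad ` set cols. dot u v} = ?pad ` {c \<in> set cols. dot (take k u) c}"
    using cols(2) assms(2) by (auto simp: dot_append_replicate_False)
  also have "card \<dots> = wt (map (dot (take k u)) cols)"
    using cols(1) by (simp add: card_image inj_on_def wt_map_distinct)
  finally show ?thesis .
qed

lemma wt_simplex_comp_codeword:
  assumes "projective k cols" and "length u = k + h"
  shows "wt (map (dot u) (simplex_comp_cols k h cols)) =
    (if u = replicate (k + h) False then 0 else 2 ^ (k + h - 1) - wt (map (dot (take k u)) cols))"
  using assms by (simp add: wt_simplex_comp_codeword_eq_card_diff card_dot_eq)

lemma simplex_comp_eq_image:
  "simplex_comp k h cols = (\<lambda>u. map (dot u) (simplex_comp_cols k h cols)) ` {u. length u = k + h}"
  unfolding simplex_comp_def code_of_cols_def by auto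

lemma finite_simplex_comp: "finite (simplex_comp k h cols)"
  unfolding simplex_comp_eq_image using finite_bool_lists by simp

lemma finite_code_of_cols: "finite (code_of_cols k cols)"
  unfolding code_of_cols_def using finite_bool_lists by simp

lemma max_wt_code_of_cols_lt:
  assumes "projective k cols" and "nonzero_weights (code_of_cols k cols) \<noteq> {}"
  shows "max_wt (code_of_cols k cols) < 2 ^ k"
proof -
  have "max_wt (code_of_cols k cols) \<in> nonzero_weights (code_of_cols k cols)"
    unfolding max_wt_def using assms(2) by (intro Max_in finite_nonzero_weights finite_code_of_cols)
  then obtain u where "max_wt (code_of_cols k cols) = wt (map (dot u) cols)"
    by (auto simp: nonzero_weights_def code_of_cols_def)
  also have "\<dots> \<le> length cols"
    by (simp add: wt_map)
  also have "\<dots> < 2 ^ k"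
    using assms(1) by (rule length_lt_if_projective)
  finally show ?thesis .
qed

context
  fixes k h :: nat and cols :: "bool list list"
  assumes projective: "projective k cols"
    and one_le_h: "1 \<le> h"
    and nonzero_weights_cols: "nonzero_weights (code_of_cols k cols) \<noteq> {}"
begin

lemma max_wt_code_of_cols_lt_half: "max_wt (code_of_cols k cols) < 2 ^ (k + h - 1)"
proof -
  have "(2 :: nat) ^ k \<le> 2 ^ (k + h - 1)"
    using one_le_h by (intro power_increasing) auto
  then show ?thesis
    using max_wt_code_of_cols_lt[OF projective nonzero_weights_cols] by linarith
qed

lemma simplex_comp_weight_bounds:
  assumes "c \<in> simplex_comp k h cols" and "wt c \<noteq> 0"
  shows "2 ^ (k + h - 1) - max_wt (code_of_cols k cols) \<le> wt c \<and> wt c \<le> 2 ^ (k + h - 1)"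
proof -
  obtain u where u: "length u = k + h" and c: "c = map (dot u) (simplex_comp_cols k h cols)"
    using assms(1) unfolding simplex_comp_eq_image by blast
  have "map (dot (take k u)) cols \<in> code_of_cols k cols"
    using u by (auto simp: code_of_cols_def)
  then have "wt (map (dot (take k u)) cols) \<le> max_wt (code_of_cols k cols)"
    by (intro wt_le_max_wt finite_code_of_cols)
  then show ?thesis
    using assms(2) by (auto simp: c wt_simplex_comp_codeword[OF projective u] split: if_splits)
qed

lemma min_wt_simplex_comp:
  "min_wt (simplex_comp k h cols) = 2 ^ (k + h - 1) - max_wt (code_of_cols k cols)"
proof -
  have "max_wt (code_of_cols k cols) \<in> nonzero_weights (code_of_cols k cols)"
    unfolding max_wt_def using nonzero_weights_cols
    by (intro Max_in finite_nonzero_weights finite_code_of_cols)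
  then obtain u where u: "length u = k" and wt_u: "wt (map (dot u) cols) = max_wt (code_of_cols k cols)"
    and wt_u_nonzero: "wt (map (dot u) cols) \<noteq> 0"
    by (auto simp: nonzero_weights_def code_of_cols_def)
  have "wt (map (dot (replicate k False)) cols) = 0"
    by (simp add: wt_map dot_replicate_False_left)
  then have "u \<noteq> replicate k False"
    using wt_u_nonzero by metis
  then have "u @ replicate h False \<noteq> replicate (k + h) False"
    by (simp add: replicate_add)
  then have "wt (map (dot (u @ replicate h False)) (simplex_comp_cols k h cols)) =
      2 ^ (k + h - 1) - max_wt (code_of_cols k cols)"
    using u wt_u by (simp add: wt_simplex_comp_codeword[OF projective])
  moreover have "map (dot (u @ replicate h False)) (simplex_comp_cols k h cols) \<in> simplex_comp k h cols"
    using u by (auto simp: simplex_comp_eq_image)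
  ultimately show ?thesis
    using max_wt_code_of_cols_lt_half simplex_comp_weight_bounds
    by (intro min_wt_eqI[OF finite_simplex_comp]) auto
qed

lemma max_wt_simplex_comp: "max_wt (simplex_comp k h cols) = 2 ^ (k + h - 1)"
proof -
  let ?u = "replicate k False @ True # replicate (h - 1) False"
  have len_u: "length ?u = k + h"
    using one_le_h by simp
  have nonzero_u: "?u \<noteq> replicate (k + h) False"
  proof
    assume "?u = replicate (k + h) False"
    then have "?u ! k = replicate (k + h) False ! k"
      by simp
    then show False
      using one_le_h by (simp add: nth_append)
  qed
  have "wt (map (dot (take k ?u)) cols) = 0"
    by (simp add: wt_map dot_replicate_False_left)
  then have wt_u: "wt (map (dot ?u) (simplex_comp_cols k h cols)) = 2 ^ (k + h - 1)"
    by (simp only: wt_simplex_comp_codeword[OF projective len_u] nonzero_u if_False diff_zero)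
  have "map (dot ?u) (simplex_comp_cols k h cols) \<in> simplex_comp k h cols"
    using len_u unfolding simplex_comp_eq_image by blast
  then show ?thesis
  proof (rule max_wt_eqI[OF finite_simplex_comp _ wt_u])
    show "wt c \<le> 2 ^ (k + h - 1)" if "c \<in> simplex_comp k h cols" for c
      using simplex_comp_weight_bounds[OF that] by (cases "wt c = 0") auto
  qed simp
qed

end

lemma two_power_eq_double: "0 < n \<Longrightarrow> (2 :: nat) ^ n = 2 * 2 ^ (n - 1)"
  by (cases n) simp_all

lemma eight_mul_two_power_le:
  assumes "2 \<le> m" and "1 \<le> h"
  shows "8 * 2 ^ (2 * m - 1) \<le> (2 :: nat) ^ (3 * m + h - 1)"
proof -
  have "(2 :: nat) ^ (3 * m + h - 1) = 2 ^ (2 * m - 1) * 2 ^ (m + h)"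
    using assms(1) by (simp add: power_add[symmetric])
  moreover have "(2 :: nat) ^ 3 \<le> 2 ^ (m + h)"
    using assms by (intro power_increasing) auto
  ultimately show ?thesis
    by simp
qed

theorem proposition4p3:
  fixes m h :: nat and cols rs :: "bool list list"
  assumes "m \<ge> 2" and "h \<ge> 1"
    and "projective (3 * m) cols"
    and "length cols = 2 ^ (2 * m) - 1"
    and "card (code_of_cols (3 * m) cols) = 2 ^ (3 * m)"
    and "nonzero_weights (code_of_cols (3 * m) cols) =
           {2 ^ (2 * m - 1) - 2 ^ (m - 1), 2 ^ (2 * m - 1), 2 ^ (2 * m - 1) + 2 ^ (m - 1)}"
    and "ext_basis (simplex_comp (3 * m) h cols) (length (simplex_comp_cols (3 * m) h cols))
           (3 * m + h) rs"
  shows "let C' = ext_code (simplex_comp (3 * m) h cols)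
                    (length (simplex_comp_cols (3 * m) h cols)) rs;
             n' = 2 ^ (3 * m + h - 1) - 2 ^ (2 * m) - 2 ^ m
         in minimal_code C'
          \<and> code_params C' (2 ^ (3 * m + h) - 2 ^ (2 * m) + n') (3 * m + h)
               (2 ^ (3 * m + h - 1) - 2 ^ (2 * m - 1) - 2 ^ (m - 1))
          \<and> max_wt C' = 2 ^ (3 * m + h) - 2 ^ (2 * m) - 2 ^ m
          \<and> \<not> ashikhmin_barg C'"
proof -
  let ?C0 = "code_of_cols (3 * m) cols" and ?D = "simplex_comp (3 * m) h cols"
    and ?N = "length (simplex_comp_cols (3 * m) h cols)"
  define a b t where "a = (2 :: nat) ^ (2 * m - 1)" and "b = (2 :: nat) ^ (m - 1)"
    and "t = (2 :: nat) ^ (3 * m + h - 1)"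
  have powers: "2 ^ (2 * m) = 2 * a" "2 ^ m = 2 * b" "2 ^ (3 * m + h) = 2 * t"
    using assms(1) unfolding a_def b_def t_def by (simp_all add: two_power_eq_double)
  have "b \<le> a" and "1 \<le> b" and "8 * a \<le> t"
    using eight_mul_two_power_le[OF assms(1,2)] unfolding a_def b_def t_def
    by (simp_all add: power_increasing)
  have "nonzero_weights ?C0 \<noteq> {}" and "max_wt ?C0 = a + b"
    using assms(6) by (simp_all add: max_wt_def a_def b_def)
  then have min_D: "min_wt ?D = t - (a + b)" and max_D: "max_wt ?D = t"
    using min_wt_simplex_comp[OF assms(3,2)] max_wt_simplex_comp[OF assms(3,2)] by (simp_all add: t_def)
  have len_N: "?N = 2 * t - 2 * a"
    using length_simplex_comp_cols[OF assms(3)] assms(4) powers \<open>1 \<le> b\<close> \<open>b \<le> a\<close> by simp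
  have ext: "2 \<le> 3 * m + h" "\<forall>c\<in>?D. length c = ?N" "max_wt ?D < 2 * min_wt ?D"
    using assms(1) \<open>8 * a \<le> t\<close> \<open>b \<le> a\<close> \<open>1 \<le> b\<close> unfolding min_D max_D
    by (auto simp: simplex_comp_def code_of_cols_def)
  show ?thesis
    using minimal_ext_code[OF assms(7) ext] lin_code_ext_code[OF assms(7) ext]
      card_ext_code[OF assms(7) ext] min_wt_ext_code[OF assms(7) ext]
      max_wt_ext_code[OF assms(7) ext] ext_code_not_ashikhmin_barg[OF assms(7) ext]
      \<open>8 * a \<le> t\<close> \<open>b \<le> a\<close> \<open>1 \<le> b\<close>
    unfolding Let_def code_params_def min_D max_D len_N powers a_def[symmetric] b_def[symmetric] t_def[symmetric]
    by (simp add: algebra_simps)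
qed

end
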